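(* Let $\mathcal{L}$ be a finite set of labels, $\mathcal{C}$ a finite set of classes and $\mathcal{M}$ a finite set of mixins, equipped with types as described in the context, and let $\Delta^{\mathcal{C},\mathcal{M}}_{\mathcal{L}}$ be the repository defined in the context. Let $M_1,\ldots,M_n\in\mathcal{M}$, $C\in\mathcal{C}$, let $\sigma\in\mathbb{T}$ and $\rho\in\mathbb{T}_R$ be types such that $[\![\sigma\to\rho]\!]$ is defined, and let $k\in\mathbb{N}$. If $\Delta^{\mathcal{C},\mathcal{M}}_{\mathcal{L}}\vdash_k C \triangleright M_1\triangleright\cdots\triangleright M_n : [\![\sigma\to\rho]\!]$ in $\mathsf{BCL}_k(\mathbb{T}_C)$, then $\vdash C\triangleright M_1\triangleright\cdots\triangleright M_n : \sigma\to\rho$ in the type assignment system for $\Lambda_R$ (with empty basis).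
   Context: \textbf{The calculus $\Lambda_R$.} Terms: $M,N ::= x \mid \lambda x.M \mid MN \mid M.l \mid R \mid M\oplus R$, records $R ::= \langle l_i = M_i \mid i\in I\rangle$ ($I$ finite, labels $l_i$ pairwise distinct), with $\mathit{lbl}(\langle l_i=M_i\mid i\in I\rangle)=\{l_i\mid i\in I\}$. $\mathbf{Y}=\lambda f.(\lambda x.f(xx))(\lambda x.f(xx))$. A class is a closed term of the form $\mathbf{Y}(\lambda\,\mathit{myClass}\,\lambda\,\mathit{state}.\,R)$; a mixin is a closed term of the form $\lambda\,\mathit{argClass}.\,\mathbf{Y}(\lambda\,\mathit{myClass}\,\lambda\,\mathit{state}.\,(\mathit{argClass}\;\mathit{state})\oplus R_M)$ where $R_M$ is a record (called the record of the mixin). \textbf{Types for $\Lambda_R$.} $\mathbb{T}\ni\sigma ::= a\mid\omega\mid\sigma_1\to\sigma_2\mid\sigma_1\cap\sigma_2\mid\rho$ and record types $\mathbb{T}_R\ni\rho ::= \langle\rangle\mid\langle l:\sigma\rangle\mid\rho_1+\rho_2\mid\rho_1\cap\rho_2$ ($a$ type constants, $l$ labels). Subtyping $\le$ is the least preorder with: $\sigma\le\omega$; $\omega\le\omega\to\omega$; $\sigma\cap\tau\le\sigma$; $\sigma\cap\tau\le\tau$; $\sigma\le\tau_1,\sigma\le\tau_2\Rightarrow\sigma\le\tau_1\cap\tau_2$; $(\sigma\to\tau_1)\cap(\sigma\to\tau_2)\le\sigma\to\tau_1\cap\tau_2$; $\sigma_2\le\sigma_1,\tau_1\le\tau_2\Rightarrow\sigma_1\to\tau_1\le\sigma_2\to\tau_2$;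 $\langle l:\sigma\rangle\le\langle\rangle$; $\langle l:\sigma\rangle\cap\langle l:\tau\rangle\le\langle l:\sigma\cap\tau\rangle$; $\sigma\le\tau\Rightarrow\langle l:\sigma\rangle\le\langle l:\tau\rangle$; $\rho+\langle\rangle=\langle\rangle+\rho=\rho$; $(\rho_1+\rho_2)+\rho_3=\rho_1+(\rho_2+\rho_3)$; $(\rho_1\cap\rho_2)+\rho_3=(\rho_1+\rho_3)\cap(\rho_2+\rho_3)$; $\langle l:\sigma\rangle+(\langle l:\tau\rangle\cap\rho)=\langle l:\tau\rangle\cap\rho$; $\langle l:\sigma\rangle+(\langle l':\tau\rangle\cap\rho)=\langle l':\tau\rangle\cap(\langle l:\sigma\rangle+\rho)$ if $l\neq l'$; $\rho_1\le\rho_2\Rightarrow\rho_1+\rho\le\rho_2+\rho$; $\rho_1=\rho_2\Rightarrow\rho+\rho_1=\rho+\rho_2$. Here $\sigma=\tau$ means $\sigma\le\tau$ and $\tau\le\sigma$. Write $\langle l_i:\sigma_i\mid i\in I\rangle$ for $\bigcap_{i\in I}\langle l_i:\sigma_i\rangle$ (and $\langle\rangle$ if $I=\emptyset$). $\mathit{lbl}(\langle\rangle)=\emptyset$, $\mathit{lbl}(\langle l:\sigma\rangle)=\{l\}$, $\mathit{lbl}(\rho_1\cap\rho_2)=\mathit{lbl}(\rho_1+\rho_2)=\mathit{lbl}(\rho_1)\cup\mathit{lbl}(\rho_2)$. \textbf{Type assignment for $\Lambda_R$} (judgments $\Gamma\vdash M:\sigma$, $\Gamma$ a finite set of assumptions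 $x:\sigma$ with distinct variables): axiom $\Gamma\vdash x:\sigma$ if $x:\sigma\in\Gamma$; $\to$-introduction and elimination as usual; $\cap$-introduction; $\Gamma\vdash M:\omega$; subsumption along $\le$; $\Gamma\vdash\langle l_i=M_i\mid i\in I\rangle:\langle\rangle$; from $\Gamma\vdash M_k:\sigma$, $k\in I$ infer $\Gamma\vdash\langle l_i=M_i\mid i\in I\rangle:\langle l_k:\sigma\rangle$; from $\Gamma\vdash M:\langle l:\sigma\rangle$ infer $\Gamma\vdash M.l:\sigma$; from $\Gamma\vdash M:\rho_1$, $\Gamma\vdash R:\rho_2$ and $\mathit{lbl}(R)=\mathit{lbl}(\rho_2)$ infer $\Gamma\vdash M\oplus R:\rho_1+\rho_2$. \textbf{$\mathsf{BCL}_k(\mathbb{T}_C)$.} Types $\mathbb{T}_C\ni\tau ::= a\mid\alpha\mid\omega\mid\tau_1\to\tau_2\mid\tau_1\cap\tau_2\mid c(\tau)$ ($\alpha$ type variables, $c$ unary constructors), subtyping: the arrow/intersection axioms above together with $\tau_1\le\tau_2\Rightarrow c(\tau_1)\le c(\tau_2)$ and $c(\tau_1)\cap c(\tau_2)\le c(\tau_1\cap\tau_2)$. Level: $\mathrm{level}(\omega)=\mathrm{level}(a)=\mathrm{level}(\alpha)=0$, $\mathrm{level}(c(\tau))=1+\mathrm{level}(\tau)$, $\mathrm{level}(\sigma\to\tau)=1+\max(\mathrm{level}(\sigma),\mathrm{level}(\tau))$, $\mathrm{level}(\sigma\cap\tau)=\max(\mathrm{level}(\sigma),\mathrm{level}(\tau))$;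 for a substitution $S$ of types for type variables, $\mathrm{level}(S)=\max_{\alpha\in\mathrm{dom}(S)}\mathrm{level}(S(\alpha))$. A repository $\Delta$ is a finite set of typed combinator names $C:\tau$; combinatory terms are $E::=C\mid(E\,E')$ with $C\in\mathrm{dom}(\Delta)$. Rules: from $C:\tau\in\Delta$ and $\mathrm{level}(S)\le k$ infer $\Delta\vdash_k C:S(\tau)$; $\to$-elimination; $\cap$-introduction; subsumption. \textbf{Translation.} Fix a finite set of labels $\mathcal{L}$; use a unary constructor $\langle\!\langle\cdot\rangle\!\rangle$ and a unary constructor $l(\cdot)$ for each $l\in\mathcal{L}$. The partial map $[\![\cdot]\!]:\mathbb{T}\to\mathbb{T}_C$ is $[\![\omega]\!]=\omega$, $[\![a]\!]=a$, $[\![\sigma\to\tau]\!]=[\![\sigma]\!]\to[\![\tau]\!]$, $[\![\sigma\cap\tau]\!]=[\![\sigma]\!]\cap[\![\tau]\!]$, $[\![\langle l:\tau\rangle]\!]=\langle\!\langle l([\![\tau]\!])\rangle\!\rangle$ ($l\in\mathcal{L}$), $[\![\langle\rangle]\!]=\langle\!\langle\omega\rangle\!\rangle$; it is undefined on types containing $+$. \textbf{Setting.} $\mathcal{C}$ is a finite set of classes; for each $C\in\mathcal{C}$ types $\sigma_C\in\mathbb{T}$, $\rho_C\in\mathbb{T}_R$ with $[\![\sigma_C\to\rho_C]\!]$ defined and $\vdash C:\sigma_C\to\rho_C$. $\mathcal{M}$ is a finite set of mixins; for each $M\in\mathcal{M}$ types $\sigma_M\in\mathbb{T}$, $\rho^1_M,\rho^2_M\in\mathbb{T}_R$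 with $[\![\sigma_M]\!],[\![\rho^1_M]\!],[\![\rho^2_M]\!]$ defined such that for all $\rho\in\mathbb{T}_R$, $\vdash M:(\sigma_M\to\rho\cap\rho^1_M)\to(\sigma_M\to\rho+\rho^2_M)$; and $L_M=\mathit{lbl}(\rho^2_M)\subseteq\mathcal{L}$ is the non-empty set of labels defined by $M$ (the labels of its record $R_M$). The repository is $\Delta^{\mathcal{C},\mathcal{M}}_{\mathcal{L}}=\{C:[\![\sigma_C\to\rho_C]\!]\mid C\in\mathcal{C}\}\cup\{M:((\![\![\sigma_M]\!]\to[\![\rho^1_M]\!])\to([\![\sigma_M]\!]\to[\![\rho^2_M]\!]))\cap\bigcap_{l\in\mathcal{L}\setminus L_M}((\![\![\sigma_M]\!]\to\langle\!\langle l(\alpha_l)\rangle\!\rangle)\to([\![\sigma_M]\!]\to\langle\!\langle l(\alpha_l)\rangle\!\rangle))\mid M\in\mathcal{M}\}$, with distinct type variables $\alpha_l$. Notation: $x\triangleright f$ stands for $f\,x$, left associative, so $C\triangleright M_1\triangleright\cdots\triangleright M_n=M_n(\cdots(M_1\,C))$ (read as a combinatory term over the names in the repository, and as a $\Lambda_R$ term). *)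

theory Defs
  imports Main "HOL-Library.List_Lexorder" "HOL-Library.Char_ord"
begin

type_synonym var = string
type_synonym label = string

datatype trm =
    Var var
  | Lam var trm
  | App trm trm
  | Sel trm label
  | Rec "(label \<times> trm) list"
  | Ext trm "(label \<times> trm) list"

fun fv :: "trm \<Rightarrow> var set" where
  "fv (Var x) = {x}"
| "fv (Lam x M) = fv M - {x}"
| "fv (App M N) = fv M \<union> fv N"
| "fv (Sel M l) = fv M"
| "fv (Rec R) = (\<Union>p\<in>set R. fv (snd p))"
| "fv (Ext M R) = fv M \<union> (\<Union>p\<in>set R. fv (snd p))"

fun wf_trm :: "trm \<Rightarrow> bool" where
  "wf_trm (Var x) = True"
| "wf_trm (Lam x M) = wf_trm M"
| "wf_trm (App M N) = (wf_trm M \<and> wf_trm N)"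
| "wf_trm (Sel M l) = wf_trm M"
| "wf_trm (Rec R) = (distinct (map fst R) \<and> (\<forall>p\<in>set R. wf_trm (snd p)))"
| "wf_trm (Ext M R) = (wf_trm M \<and> distinct (map fst R) \<and> (\<forall>p\<in>set R. wf_trm (snd p)))"

definition closed :: "trm \<Rightarrow> bool" where
  "closed M \<longleftrightarrow> fv M = {}"

definition rlbl :: "(label \<times> trm) list \<Rightarrow> label set" where
  "rlbl R = set (map fst R)"

definition Ycomb :: trm where
  "Ycomb = Lam ''f'' (App (Lam ''x'' (App (Var ''f'') (App (Var ''x'') (Var ''x''))))
                          (Lam ''x'' (App (Var ''f'') (App (Var ''x'') (Var ''x'')))))"

definition is_class :: "trm \<Rightarrow> bool" where
  "is_class C \<longleftrightarrow> closed C \<and> wf_trm C \<and>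
     (\<exists>mc st R. C = App Ycomb (Lam mc (Lam st (Rec R))))"

(* a mixin with record R_M:
   closed term  \<lambda>argClass. Y (\<lambda>myClass \<lambda>state. (argClass state) \<oplus> R_M),
   where argClass is distinct from myClass and state (so it refers to the outer binder) *)
definition mixin_term :: "var \<Rightarrow> var \<Rightarrow> var \<Rightarrow> (label \<times> trm) list \<Rightarrow> trm" where
  "mixin_term a mc st R =
     Lam a (App Ycomb (Lam mc (Lam st (Ext (App (Var a) (Var st)) R))))"

definition is_mixin_with_record :: "trm \<Rightarrow> (label \<times> trm) list \<Rightarrow> bool" where
  "is_mixin_with_record M R \<longleftrightarrow> closed M \<and> wf_trm M \<and>
     (\<exists>a mc st. a \<noteq> mc \<and> a \<noteq> st \<and> M = mixin_term a mc st R)"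

datatype ty =
    TConst string
  | Omega
  | Arr ty ty
  | Inter ty ty
  | REmpty
  | Field label ty
  | Plus ty ty

(* wf_ty t: t \<in> \<T>;  rty t: t \<in> \<T>_R *)
fun wf_ty :: "ty \<Rightarrow> bool" and rty :: "ty \<Rightarrow> bool" where
  "wf_ty (TConst a) = True"
| "wf_ty Omega = True"
| "wf_ty (Arr s t) = (wf_ty s \<and> wf_ty t)"
| "wf_ty (Inter s t) = (wf_ty s \<and> wf_ty t)"
| "wf_ty REmpty = True"
| "wf_ty (Field l s) = wf_ty s"
| "wf_ty (Plus r1 r2) = (rty r1 \<and> rty r2)"
| "rty REmpty = True"
| "rty (Field l s) = wf_ty s"
| "rty (Plus r1 r2) = (rty r1 \<and> rty r2)"
| "rty (Inter r1 r2) = (rty r1 \<and> rty r2)"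
| "rty (TConst a) = False"
| "rty Omega = False"
| "rty (Arr s t) = False"

fun tlbl :: "ty \<Rightarrow> label set" where
  "tlbl REmpty = {}"
| "tlbl (Field l s) = {l}"
| "tlbl (Inter r1 r2) = tlbl r1 \<union> tlbl r2"
| "tlbl (Plus r1 r2) = tlbl r1 \<union> tlbl r2"
| "tlbl _ = {}"

(* subtyping: least preorder on \<T> closed under the listed rules; equations = both directions *)
inductive sub :: "ty \<Rightarrow> ty \<Rightarrow> bool" (infix "\<le>\<^sub>R" 50) where
  refl: "wf_ty s \<Longrightarrow> s \<le>\<^sub>R s"
| trans: "s \<le>\<^sub>R t \<Longrightarrow> t \<le>\<^sub>R u \<Longrightarrow> s \<le>\<^sub>R u"
| omega: "wf_ty s \<Longrightarrow> s \<le>\<^sub>R Omega"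
| omega_arr: "Omega \<le>\<^sub>R Arr Omega Omega"
| inter_l: "wf_ty s \<Longrightarrow> wf_ty t \<Longrightarrow> Inter s t \<le>\<^sub>R s"
| inter_r: "wf_ty s \<Longrightarrow> wf_ty t \<Longrightarrow> Inter s t \<le>\<^sub>R t"
| inter_glb: "s \<le>\<^sub>R t1 \<Longrightarrow> s \<le>\<^sub>R t2 \<Longrightarrow> s \<le>\<^sub>R Inter t1 t2"
| arr_inter: "wf_ty s \<Longrightarrow> wf_ty t1 \<Longrightarrow> wf_ty t2 \<Longrightarrow>
     Inter (Arr s t1) (Arr s t2) \<le>\<^sub>R Arr s (Inter t1 t2)"
| arr: "s2 \<le>\<^sub>R s1 \<Longrightarrow> t1 \<le>\<^sub>R t2 \<Longrightarrow> Arr s1 t1 \<le>\<^sub>R Arr s2 t2"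
| field_empty: "wf_ty s \<Longrightarrow> Field l s \<le>\<^sub>R REmpty"
| field_inter: "wf_ty s \<Longrightarrow> wf_ty t \<Longrightarrow> Inter (Field l s) (Field l t) \<le>\<^sub>R Field l (Inter s t)"
| field_mono: "s \<le>\<^sub>R t \<Longrightarrow> Field l s \<le>\<^sub>R Field l t"
| plus_empty_r1: "rty r \<Longrightarrow> Plus r REmpty \<le>\<^sub>R r"
| plus_empty_r2: "rty r \<Longrightarrow> r \<le>\<^sub>R Plus r REmpty"
| plus_empty_l1: "rty r \<Longrightarrow> Plus REmpty r \<le>\<^sub>R r"
| plus_empty_l2: "rty r \<Longrightarrow> r \<le>\<^sub>R Plus REmpty r"
| plus_assoc1: "rty r1 \<Longrightarrow> rty r2 \<Longrightarrow> rty r3 \<Longrightarrow>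
     Plus (Plus r1 r2) r3 \<le>\<^sub>R Plus r1 (Plus r2 r3)"
| plus_assoc2: "rty r1 \<Longrightarrow> rty r2 \<Longrightarrow> rty r3 \<Longrightarrow>
     Plus r1 (Plus r2 r3) \<le>\<^sub>R Plus (Plus r1 r2) r3"
| plus_inter1: "rty r1 \<Longrightarrow> rty r2 \<Longrightarrow> rty r3 \<Longrightarrow>
     Plus (Inter r1 r2) r3 \<le>\<^sub>R Inter (Plus r1 r3) (Plus r2 r3)"
| plus_inter2: "rty r1 \<Longrightarrow> rty r2 \<Longrightarrow> rty r3 \<Longrightarrow>
     Inter (Plus r1 r3) (Plus r2 r3) \<le>\<^sub>R Plus (Inter r1 r2) r3"
| plus_same1: "wf_ty s \<Longrightarrow> wf_ty t \<Longrightarrow> rty r \<Longrightarrow>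
     Plus (Field l s) (Inter (Field l t) r) \<le>\<^sub>R Inter (Field l t) r"
| plus_same2: "wf_ty s \<Longrightarrow> wf_ty t \<Longrightarrow> rty r \<Longrightarrow>
     Inter (Field l t) r \<le>\<^sub>R Plus (Field l s) (Inter (Field l t) r)"
| plus_diff1: "l \<noteq> l' \<Longrightarrow> wf_ty s \<Longrightarrow> wf_ty t \<Longrightarrow> rty r \<Longrightarrow>
     Plus (Field l s) (Inter (Field l' t) r) \<le>\<^sub>R Inter (Field l' t) (Plus (Field l s) r)"
| plus_diff2: "l \<noteq> l' \<Longrightarrow> wf_ty s \<Longrightarrow> wf_ty t \<Longrightarrow> rty r \<Longrightarrow>
     Inter (Field l' t) (Plus (Field l s) r) \<le>\<^sub>R Plus (Field l s) (Inter (Field l' t) r)"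
| plus_mono_l: "rty r1 \<Longrightarrow> rty r2 \<Longrightarrow> rty r \<Longrightarrow> r1 \<le>\<^sub>R r2 \<Longrightarrow> Plus r1 r \<le>\<^sub>R Plus r2 r"
| plus_cong_r: "rty r1 \<Longrightarrow> rty r2 \<Longrightarrow> rty r \<Longrightarrow> r1 \<le>\<^sub>R r2 \<Longrightarrow> r2 \<le>\<^sub>R r1 \<Longrightarrow>
     Plus r r1 \<le>\<^sub>R Plus r r2"

inductive typing :: "(var \<rightharpoonup> ty) \<Rightarrow> trm \<Rightarrow> ty \<Rightarrow> bool" where
  t_var: "\<Gamma> x = Some s \<Longrightarrow> typing \<Gamma> (Var x) s"
| t_abs: "wf_ty s \<Longrightarrow> typing (\<Gamma>(x \<mapsto> s)) M t \<Longrightarrow> typing \<Gamma> (Lam x M) (Arr s t)"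
| t_app: "typing \<Gamma> M (Arr s t) \<Longrightarrow> typing \<Gamma> N s \<Longrightarrow> typing \<Gamma> (App M N) t"
| t_inter: "typing \<Gamma> M s \<Longrightarrow> typing \<Gamma> M t \<Longrightarrow> typing \<Gamma> M (Inter s t)"
| t_omega: "typing \<Gamma> M Omega"
| t_sub: "typing \<Gamma> M s \<Longrightarrow> s \<le>\<^sub>R t \<Longrightarrow> typing \<Gamma> M t"
| t_rec_empty: "typing \<Gamma> (Rec R) REmpty"
| t_rec_field: "(l, M) \<in> set R \<Longrightarrow> typing \<Gamma> M s \<Longrightarrow> typing \<Gamma> (Rec R) (Field l s)"
| t_sel: "typing \<Gamma> M (Field l s) \<Longrightarrow> typing \<Gamma> (Sel M l) s"
| t_ext: "rty r1 \<Longrightarrow> rty r2 \<Longrightarrow> typing \<Gamma> M r1 \<Longrightarrow> typing \<Gamma> (Rec R) r2 \<Longrightarrow>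
     rlbl R = tlbl r2 \<Longrightarrow> typing \<Gamma> (Ext M R) (Plus r1 r2)"

(* unary constructors: \<langle>\<langle>.\<rangle>\<rangle> and l(.) for each label l *)
datatype ctor = RecBr | LabC label

datatype cty =
    CConst string
  | TVar string
  | COmega
  | CArr cty cty
  | CInter cty cty
  | Con ctor cty

inductive csub :: "cty \<Rightarrow> cty \<Rightarrow> bool" (infix "\<le>\<^sub>C" 50) where
  crefl: "s \<le>\<^sub>C s"
| ctrans: "s \<le>\<^sub>C t \<Longrightarrow> t \<le>\<^sub>C u \<Longrightarrow> s \<le>\<^sub>C u"
| comega: "s \<le>\<^sub>C COmega"
| comega_arr: "COmega \<le>\<^sub>C CArr COmega COmega"
| cinter_l: "CInter s t \<le>\<^sub>C s"
| cinter_r: "CInter s t \<le>\<^sub>C t"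
| cinter_glb: "s \<le>\<^sub>C t1 \<Longrightarrow> s \<le>\<^sub>C t2 \<Longrightarrow> s \<le>\<^sub>C CInter t1 t2"
| carr_inter: "CInter (CArr s t1) (CArr s t2) \<le>\<^sub>C CArr s (CInter t1 t2)"
| carr: "s2 \<le>\<^sub>C s1 \<Longrightarrow> t1 \<le>\<^sub>C t2 \<Longrightarrow> CArr s1 t1 \<le>\<^sub>C CArr s2 t2"
| ccon_mono: "t1 \<le>\<^sub>C t2 \<Longrightarrow> Con c t1 \<le>\<^sub>C Con c t2"
| ccon_inter: "CInter (Con c t1) (Con c t2) \<le>\<^sub>C Con c (CInter t1 t2)"

fun level :: "cty \<Rightarrow> nat" where
  "level COmega = 0"
| "level (CConst a) = 0"
| "level (TVar a) = 0"
| "level (Con c t) = Suc (level t)"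
| "level (CArr s t) = Suc (max (level s) (level t))"
| "level (CInter s t) = max (level s) (level t)"

fun csubst :: "(string \<Rightarrow> cty) \<Rightarrow> cty \<Rightarrow> cty" where
  "csubst S (TVar a) = S a"
| "csubst S (CConst a) = CConst a"
| "csubst S COmega = COmega"
| "csubst S (CArr s t) = CArr (csubst S s) (csubst S t)"
| "csubst S (CInter s t) = CInter (csubst S s) (csubst S t)"
| "csubst S (Con c t) = Con c (csubst S t)"

(* level(S) = max over the variables moved by S; equivalently (since level(TVar a) = 0)
   level(S) \<le> k iff every S a has level \<le> k *)
definition subst_level_le :: "(string \<Rightarrow> cty) \<Rightarrow> nat \<Rightarrow> bool" where
  "subst_level_le S k \<longleftrightarrow> (\<forall>a. S a \<noteq> TVar a \<longrightarrow> level (S a) \<le> k)"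

datatype 'n cterm = CVar 'n | CApp "'n cterm" "'n cterm"

inductive bcl :: "('n \<times> cty) set \<Rightarrow> nat \<Rightarrow> 'n cterm \<Rightarrow> cty \<Rightarrow> bool" where
  b_var: "(C, t) \<in> \<Delta> \<Longrightarrow> subst_level_le S k \<Longrightarrow> bcl \<Delta> k (CVar C) (csubst S t)"
| b_app: "bcl \<Delta> k E (CArr s t) \<Longrightarrow> bcl \<Delta> k E' s \<Longrightarrow> bcl \<Delta> k (CApp E E') t"
| b_inter: "bcl \<Delta> k E s \<Longrightarrow> bcl \<Delta> k E t \<Longrightarrow> bcl \<Delta> k E (CInter s t)"
| b_sub: "bcl \<Delta> k E s \<Longrightarrow> s \<le>\<^sub>C t \<Longrightarrow> bcl \<Delta> k E t"

fun tr :: "label set \<Rightarrow> ty \<Rightarrow> cty option" where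
  "tr L Omega = Some COmega"
| "tr L (TConst a) = Some (CConst a)"
| "tr L (Arr s t) = (case (tr L s, tr L t) of (Some x, Some y) \<Rightarrow> Some (CArr x y) | _ \<Rightarrow> None)"
| "tr L (Inter s t) = (case (tr L s, tr L t) of (Some x, Some y) \<Rightarrow> Some (CInter x y) | _ \<Rightarrow> None)"
| "tr L (Field l t) = (if l \<in> L then map_option (\<lambda>x. Con RecBr (Con (LabC l) x)) (tr L t) else None)"
| "tr L REmpty = Some (Con RecBr COmega)"
| "tr L (Plus r1 r2) = None"

definition defined :: "label set \<Rightarrow> ty \<Rightarrow> bool" where
  "defined L t \<longleftrightarrow> tr L t \<noteq> None"

definition setting ::
  "label set \<Rightarrow> trm set \<Rightarrow> (trm \<Rightarrow> ty) \<Rightarrow> (trm \<Rightarrow> ty) \<Rightarrow>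
   trm set \<Rightarrow> (trm \<Rightarrow> ty) \<Rightarrow> (trm \<Rightarrow> ty) \<Rightarrow> (trm \<Rightarrow> ty) \<Rightarrow> bool" where
  "setting L Cs sigC rhoC Ms sigM rho1M rho2M \<longleftrightarrow>
     finite L \<and> finite Cs \<and> finite Ms \<and>
     (\<forall>C\<in>Cs. is_class C \<and> wf_ty (sigC C) \<and> rty (rhoC C) \<and>
        defined L (Arr (sigC C) (rhoC C)) \<and>
        typing Map.empty C (Arr (sigC C) (rhoC C))) \<and>
     (\<forall>M\<in>Ms. wf_ty (sigM M) \<and> rty (rho1M M) \<and> rty (rho2M M) \<and>
        defined L (sigM M) \<and> defined L (rho1M M) \<and> defined L (rho2M M) \<and>
        (\<forall>r. rty r \<longrightarrow>
           typing Map.empty M (Arr (Arr (sigM M) (Inter r (rho1M M)))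
                                (Arr (sigM M) (Plus r (rho2M M))))) \<and>
        (\<exists>R. is_mixin_with_record M R \<and> rlbl R = tlbl (rho2M M)) \<and>
        tlbl (rho2M M) \<subseteq> L \<and> tlbl (rho2M M) \<noteq> {})"

(* the BCL type of a mixin M in the repository; alpha_l is the type variable named l *)
definition mixin_cty :: "label set \<Rightarrow> ty \<Rightarrow> ty \<Rightarrow> ty \<Rightarrow> cty" where
  "mixin_cty L sM r1 r2 =
     (let s = the (tr L sM);
          base = CArr (CArr s (the (tr L r1))) (CArr s (the (tr L r2)));
          part = (\<lambda>l. CArr (CArr s (Con RecBr (Con (LabC l) (TVar l))))
                            (CArr s (Con RecBr (Con (LabC l) (TVar l)))))
      in foldl (\<lambda>acc l. CInter acc (part l)) base (sorted_list_of_set (L - tlbl r2)))"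

definition repo ::
  "label set \<Rightarrow> trm set \<Rightarrow> (trm \<Rightarrow> ty) \<Rightarrow> (trm \<Rightarrow> ty) \<Rightarrow>
   trm set \<Rightarrow> (trm \<Rightarrow> ty) \<Rightarrow> (trm \<Rightarrow> ty) \<Rightarrow> (trm \<Rightarrow> ty) \<Rightarrow> (trm \<times> cty) set" where
  "repo L Cs sigC rhoC Ms sigM rho1M rho2M =
     {(C, the (tr L (Arr (sigC C) (rhoC C)))) | C. C \<in> Cs} \<union>
     {(M, mixin_cty L (sigM M) (rho1M M) (rho2M M)) | M. M \<in> Ms}"

(* C \<triangleright> M1 \<triangleright> ... \<triangleright> Mn = Mn (... (M1 C)), as combinatory term and as Lambda_R term *)
definition pipe_c :: "trm \<Rightarrow> trm list \<Rightarrow> trm cterm" where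
  "pipe_c C ms = foldl (\<lambda>acc M. CApp (CVar M) acc) (CVar C) ms"

definition pipe_l :: "trm \<Rightarrow> trm list \<Rightarrow> trm" where
  "pipe_l C ms = foldl (\<lambda>acc M. App M acc) C ms"

end

theory Submission
  imports Defs
begin

text \<open>
  Read BCL types back as \<open>\<Lambda>\<^sub>R\<close> types: \<open>\<langle>\<langle>l(\<tau>)\<rangle>\<rangle>\<close> becomes \<open>\<langle>l:\<tau>\<rangle>\<close> and type
  variables become \<open>\<omega>\<close>. This back-translation is monotone for subtyping and
  inverts \<open>[[\<cdot>]]\<close>. Every substitution instance of a repository type reads back
  as a type the combinator really has: for classes the type is ground, for a
  mixin the main component follows from its assumed typing at \<open>\<rho> = \<langle>\<rangle>\<close>, and
  each component \<open>\<langle>\<langle>l(\<alpha>\<^sub>l)\<rangle>\<rangle> \<rightarrow> \<langle>\<langle>l(\<alpha>\<^sub>l)\<rangle>\<rangle>\<close> holds because the mixin's record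
  does not define \<open>l\<close>, so the field \<open>l\<close> of the argument class survives the
  extension. Induction on the BCL derivation then gives the typing of the
  pipeline.
\<close>

declare sub.trans[trans]

lemma rty_imp_wf_ty: "rty r \<Longrightarrow> wf_ty r"
  by (induction r) auto

lemma rty_sub_REmpty: "rty r \<Longrightarrow> r \<le>\<^sub>R REmpty"
proof (induction r)
  case (Inter r1 r2)
  then show ?case using sub.trans[OF sub.inter_l] rty_imp_wf_ty by auto
next
  case (Plus r1 r2)
  then have "Plus r1 r2 \<le>\<^sub>R Plus REmpty r2" by (auto intro: sub.plus_mono_l)
  also have "\<dots> \<le>\<^sub>R r2" using Plus by (auto intro: sub.plus_empty_l1)
  also have "\<dots> \<le>\<^sub>R REmpty" using Plus by auto
  finally show ?case .
qed (auto intro: sub.refl sub.field_empty)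

fun untr :: "cty \<Rightarrow> ty" and untr_rec :: "cty \<Rightarrow> ty" where
  "untr (CConst a) = TConst a"
| "untr (TVar a) = Omega"
| "untr COmega = Omega"
| "untr (CArr s t) = Arr (untr s) (untr t)"
| "untr (CInter s t) = Inter (untr s) (untr t)"
| "untr (Con RecBr t) = untr_rec t"
| "untr (Con (LabC l) t) = Omega"
| "untr_rec (Con (LabC l) t) = Field l (untr t)"
| "untr_rec (CInter s t) = Inter (untr_rec s) (untr_rec t)"
| "untr_rec COmega = REmpty"
| "untr_rec (Con RecBr t) = REmpty"
| "untr_rec (CConst a) = REmpty"
| "untr_rec (TVar a) = REmpty"
| "untr_rec (CArr s t) = REmpty"

lemma wf_ty_untr: "wf_ty (untr t) \<and> rty (untr_rec t)"
proof (induction t)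
  case (Con c t)
  then show ?case by (cases c) (auto simp: rty_imp_wf_ty)
qed (auto simp: rty_imp_wf_ty)

lemma untr_mono: "s \<le>\<^sub>C t \<Longrightarrow> untr s \<le>\<^sub>R untr t \<and> untr_rec s \<le>\<^sub>R untr_rec t"
proof (induction rule: csub.induct)
  case (ccon_mono t1 t2 c)
  then show ?case by (cases c) (auto intro: sub.field_mono sub.refl)
next
  case (ccon_inter c t1 t2)
  then show ?case using wf_ty_untr rty_imp_wf_ty
    by (cases c) (auto intro: sub.field_inter sub.refl sub.inter_l sub.omega)
qed (use wf_ty_untr rty_imp_wf_ty in \<open>auto intro: sub.intros rty_sub_REmpty\<close>)

lemma untr_tr: "tr L t = Some c \<Longrightarrow> untr c = t"
  by (induction t arbitrary: c) (auto split: option.splits if_splits)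

lemma csubst_tr: "tr L t = Some c \<Longrightarrow> csubst S c = c"
  by (induction t arbitrary: c) (auto split: option.splits if_splits)

fun trm_of_cterm :: "trm cterm \<Rightarrow> trm" where
  "trm_of_cterm (CVar N) = N"
| "trm_of_cterm (CApp E E') = App (trm_of_cterm E) (trm_of_cterm E')"

lemma trm_of_pipe_c: "trm_of_cterm (pipe_c C ms) = pipe_l C ms"
proof -
  have "trm_of_cterm (foldl (\<lambda>acc M. CApp (CVar M) acc) E ms)
      = foldl (\<lambda>acc M. App M acc) (trm_of_cterm E) ms" for E
    by (induction ms arbitrary: E) auto
  then show ?thesis unfolding pipe_c_def pipe_l_def by simp
qed

lemma bcl_typing_untr:
  assumes "bcl \<Delta> k E \<tau>"
    and "\<And>N t S. (N, t) \<in> \<Delta> \<Longrightarrow> typing Map.empty N (untr (csubst S t))"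
  shows "typing Map.empty (trm_of_cterm E) (untr \<tau>)"
  using assms
proof (induction rule: bcl.induct)
  case (b_sub \<Delta> k E s t)
  then show ?case using untr_mono by (auto intro: typing.t_sub)
qed (auto intro: typing.t_app typing.t_inter)

text \<open>The self-application \<open>x x\<close> only needs the type \<open>\<omega>\<close>.\<close>

lemma typing_Ycomb: "wf_ty T \<Longrightarrow> typing \<Gamma> Ycomb (Arr (Arr Omega T) T)"
  unfolding Ycomb_def
  by (intro typing.t_abs typing.t_app[where s = Omega] typing.t_var typing.t_omega) auto

fun omega_fields :: "(label \<times> trm) list \<Rightarrow> ty" where
  "omega_fields [] = REmpty"
| "omega_fields (p # R) = Inter (Field (fst p) Omega) (omega_fields R)"

lemma rty_omega_fields: "rty (omega_fields R)"
  by (induction R) auto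

lemma tlbl_omega_fields: "tlbl (omega_fields R) = rlbl R"
  by (induction R) (auto simp: rlbl_def)

lemma typing_Rec_omega_fields: "set R \<subseteq> set R0 \<Longrightarrow> typing \<Gamma> (Rec R0) (omega_fields R)"
proof (induction R)
  case Nil
  then show ?case by (auto intro: typing.t_rec_empty)
next
  case (Cons p R)
  then show ?case
    by (cases p) (auto intro!: typing.t_inter typing.t_rec_field typing.t_omega)
qed

lemma Plus_Field_omega_fields_sub:
  assumes "wf_ty X" "l \<notin> rlbl R"
  shows "Plus (Field l X) (omega_fields R) \<le>\<^sub>R Field l X"
  using assms(2)
proof (induction R)
  case Nil
  then show ?case using assms(1) by (auto intro: sub.plus_empty_r1)
next
  case (Cons p R)
  then have "l \<noteq> fst p" "l \<notin> rlbl R" by (auto simp: rlbl_def)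
  then have "Plus (Field l X) (omega_fields (p # R))
      \<le>\<^sub>R Inter (Field (fst p) Omega) (Plus (Field l X) (omega_fields R))"
    using assms(1) rty_omega_fields by (auto intro: sub.plus_diff1)
  also have "\<dots> \<le>\<^sub>R Plus (Field l X) (omega_fields R)"
    using assms(1) rty_omega_fields by (auto intro: sub.inter_r)
  also have "\<dots> \<le>\<^sub>R Field l X" using Cons.IH \<open>l \<notin> rlbl R\<close> .
  finally show ?case .
qed

lemma typing_mixin_term_Field:
  assumes "a \<noteq> mc" "a \<noteq> st" "wf_ty s" "wf_ty X" "l \<notin> rlbl R"
  shows "typing \<Gamma> (mixin_term a mc st R) (Arr (Arr s (Field l X)) (Arr s (Field l X)))"
proof -
  let ?\<Gamma>a = "\<Gamma>(a \<mapsto> Arr s (Field l X))"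
  let ?\<Gamma> = "?\<Gamma>a(mc \<mapsto> Omega, st \<mapsto> s)"
  have "typing ?\<Gamma> (App (Var a) (Var st)) (Field l X)"
    using assms(1,2) by (intro typing.t_app[where s = s] typing.t_var) auto
  then have "typing ?\<Gamma> (Ext (App (Var a) (Var st)) R) (Plus (Field l X) (omega_fields R))"
    using assms(4) rty_omega_fields typing_Rec_omega_fields tlbl_omega_fields
    by (intro typing.t_ext) auto
  then have "typing ?\<Gamma> (Ext (App (Var a) (Var st)) R) (Field l X)"
    using typing.t_sub Plus_Field_omega_fields_sub[OF assms(4,5)] by blast
  then have "typing ?\<Gamma>a (Lam mc (Lam st (Ext (App (Var a) (Var st)) R)))
      (Arr Omega (Arr s (Field l X)))"
    using assms(3) by (intro typing.t_abs) auto
  then have "typing ?\<Gamma>a (App Ycomb (Lam mc (Lam st (Ext (App (Var a) (Var st)) R))))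
      (Arr s (Field l X))"
    using assms(3,4) by (intro typing.t_app[OF typing_Ycomb]) auto
  then show ?thesis
    unfolding mixin_term_def using assms(3,4) by (intro typing.t_abs) auto
qed

lemma typing_class_entry:
  assumes "setting L Cs sigC rhoC Ms sigM rho1M rho2M" "C \<in> Cs"
  shows "typing Map.empty C (untr (csubst S (the (tr L (Arr (sigC C) (rhoC C))))))"
proof -
  obtain c where c: "tr L (Arr (sigC C) (rhoC C)) = Some c"
    using assms unfolding setting_def defined_def by blast
  then show ?thesis
    using assms untr_tr[OF c] csubst_tr[OF c] unfolding setting_def by auto
qed

lemma typing_foldl_CInter:
  assumes "typing \<Gamma> N (untr (csubst S base))"
    and "\<And>l. l \<in> set ls \<Longrightarrow> typing \<Gamma> N (untr (csubst S (part l)))"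
  shows "typing \<Gamma> N (untr (csubst S (foldl (\<lambda>acc l. CInter acc (part l)) base ls)))"
  using assms
proof (induction ls arbitrary: base)
  case (Cons l ls)
  then show ?case by (simp add: typing.t_inter)
qed simp

lemma typing_mixin_entry:
  assumes "setting L Cs sigC rhoC Ms sigM rho1M rho2M" "M \<in> Ms"
  shows "typing Map.empty M (untr (csubst S (mixin_cty L (sigM M) (rho1M M) (rho2M M))))"
proof -
  have wf: "wf_ty (sigM M)" "rty (rho1M M)" "rty (rho2M M)" "tlbl (rho2M M) \<subseteq> L"
    and typing_M: "\<And>r. rty r \<Longrightarrow> typing Map.empty M
        (Arr (Arr (sigM M) (Inter r (rho1M M))) (Arr (sigM M) (Plus r (rho2M M))))"
    using assms unfolding setting_def by auto
  obtain s c1 c2 where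
    s: "tr L (sigM M) = Some s" and c1: "tr L (rho1M M) = Some c1"
    and c2: "tr L (rho2M M) = Some c2"
    using assms unfolding setting_def defined_def by blast
  obtain R a mc st where R: "rlbl R = tlbl (rho2M M)" "a \<noteq> mc" "a \<noteq> st"
    "M = mixin_term a mc st R"
    using assms unfolding setting_def is_mixin_with_record_def by blast
  have "Arr (Arr (sigM M) (Inter REmpty (rho1M M))) (Arr (sigM M) (Plus REmpty (rho2M M)))
      \<le>\<^sub>R Arr (Arr (sigM M) (rho1M M)) (Arr (sigM M) (rho2M M))"
    using wf rty_imp_wf_ty
    by (auto intro!: sub.arr sub.refl sub.inter_glb rty_sub_REmpty sub.plus_empty_l1)
  then have base: "typing Map.empty M (Arr (Arr (sigM M) (rho1M M)) (Arr (sigM M) (rho2M M)))"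
    using typing.t_sub typing_M[of REmpty] by simp
  show ?thesis
    unfolding mixin_cty_def Let_def
  proof (rule typing_foldl_CInter)
    show "typing Map.empty M (untr (csubst S
        (CArr (CArr (the (tr L (sigM M))) (the (tr L (rho1M M))))
              (CArr (the (tr L (sigM M))) (the (tr L (rho2M M)))))))"
      using base s c1 c2 untr_tr[OF s] untr_tr[OF c1] untr_tr[OF c2]
        csubst_tr[OF s] csubst_tr[OF c1] csubst_tr[OF c2] by simp
  next
    fix l assume "l \<in> set (sorted_list_of_set (L - tlbl (rho2M M)))"
    then have "l \<notin> rlbl R" using assms(1) R(1) unfolding setting_def by auto
    then show "typing Map.empty M (untr (csubst S
        (CArr (CArr (the (tr L (sigM M))) (Con RecBr (Con (LabC l) (TVar l))))
              (CArr (the (tr L (sigM M))) (Con RecBr (Con (LabC l) (TVar l)))))))"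
      using typing_mixin_term_Field[OF R(2,3) wf(1) conjunct1[OF wf_ty_untr]] R(4)
        s untr_tr[OF s] csubst_tr[OF s] by simp
  qed
qed

lemma typing_repo_entry:
  assumes "setting L Cs sigC rhoC Ms sigM rho1M rho2M"
    and "(N, t) \<in> repo L Cs sigC rhoC Ms sigM rho1M rho2M"
  shows "typing Map.empty N (untr (csubst S t))"
  using assms typing_class_entry typing_mixin_entry unfolding repo_def by blast

theorem theorem5p4:
  fixes L :: "label set" and Cs Ms :: "trm set"
    and sigC rhoC sigM rho1M rho2M :: "trm \<Rightarrow> ty"
    and ms :: "trm list" and C :: trm and \<sigma> \<rho> :: ty and k :: nat
  assumes "setting L Cs sigC rhoC Ms sigM rho1M rho2M"
    and "set ms \<subseteq> Ms" and "C \<in> Cs"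
    and "wf_ty \<sigma>" and "rty \<rho>" and "defined L (Arr \<sigma> \<rho>)"
    and "bcl (repo L Cs sigC rhoC Ms sigM rho1M rho2M) k (pipe_c C ms)
            (the (tr L (Arr \<sigma> \<rho>)))"
  shows "typing Map.empty (pipe_l C ms) (Arr \<sigma> \<rho>)"
proof -
  obtain c where c: "tr L (Arr \<sigma> \<rho>) = Some c"
    using assms(6) unfolding defined_def by blast
  have "typing Map.empty (trm_of_cterm (pipe_c C ms)) (untr (the (tr L (Arr \<sigma> \<rho>))))"
    using bcl_typing_untr[OF assms(7) typing_repo_entry[OF assms(1)]] .
  then show ?thesis using trm_of_pipe_c untr_tr[OF c] c by simp
qed

end
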